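(* Let $A\in \mathbb{R}^{m\times n}$ and $b\in \mathbb{R}^m$ with $m<n$. Suppose that the linear system $Ax=b$ is consistent and has a solution $x_*$. If $x_*$ has more than $\operatorname{rank}(A)$ nonzero entries, then $Ax=b$ has infinitely many solutions with the same sign pattern as $x_*$.
   Context: The sign function is $\operatorname{sign}(r)=1,0,-1$ for $r>0$, $r=0$, $r<0$. Two vectors have the same sign pattern if their entrywise signs agree. *)

theory Defs
  imports "HOL-Analysis.Analysis"
begin

end

theory Submission
  imports Defs
begin

text \<open>Vectors supported on the support of \<open>x\<^sub>*\<close> form a subspace of dimension greater than
  \<open>rank A\<close>, so \<open>A\<close> cannot be injective on it: there is a nonzero \<open>y\<close> in the null space of \<open>A\<close>
  whose support lies inside that of \<open>x\<^sub>*\<close>. Moving from \<open>x\<^sub>*\<close> along \<open>y\<close> keeps \<open>A x = b\<close>, and for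
  small steps it does not change the sign of any entry; the steps form an interval, so there are
  infinitely many such solutions.\<close>

lemma null_vector_supported_on:
  fixes A :: "real ^ 'n ^ 'm" and S :: "'n set"
  assumes "rank A < card S"
  shows "\<exists>y. y \<noteq> 0 \<and> A *v y = 0 \<and> (\<forall>i. i \<notin> S \<longrightarrow> y $ i = 0)"
proof (rule ccontr)
  define V where "V = {y::real^'n. \<forall>i. i \<notin> S \<longrightarrow> y $ i = 0}"
  have "subspace V"
    unfolding V_def subspace_def by auto
  assume "\<not> ?thesis"
  then have "inj_on ((*v) A) V"
    unfolding linear_inj_on_iff_eq_0[OF matrix_vector_mul_linear \<open>subspace V\<close>]
    by (auto simp: V_def)
  then have "dim ((*v) A ` V) = dim V"
    using dim_image_eq[OF matrix_vector_mul_linear] span_eq_iff \<open>subspace V\<close> by metis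
  also have "dim V = card S"
    using dim_substandard_cart[where 'a=real and d=S] dim_vec_eq[of V] by (simp add: V_def)
  finally have "card S \<le> rank A"
    unfolding rank_dim_range by (metis dim_subset image_mono top_greatest)
  then show False
    using assms by simp
qed

lemma sgn_add_eq:
  fixes a e :: real
  assumes "\<bar>e\<bar> < \<bar>a\<bar>"
  shows "sgn (a + e) = sgn a"
  using assms by (auto simp: sgn_if)

lemma sgn_pattern_stable_along:
  fixes x y :: "real ^ 'n"
  assumes "\<And>i. x $ i = 0 \<Longrightarrow> y $ i = 0"
  shows "\<exists>\<epsilon>>0. \<forall>t. \<bar>t\<bar> < \<epsilon> \<longrightarrow> (\<forall>i. sgn ((x + t *\<^sub>R y) $ i) = sgn (x $ i))"
proof -
  define r where "r i = (if x $ i = 0 then 1 else \<bar>x $ i\<bar> / (\<bar>y $ i\<bar> + 1))" for i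
  define \<epsilon> where "\<epsilon> = Min (range r)"
  have "\<epsilon> > 0"
    unfolding \<epsilon>_def r_def by (subst Min_gr_iff) auto
  moreover have "sgn ((x + t *\<^sub>R y) $ i) = sgn (x $ i)" if "\<bar>t\<bar> < \<epsilon>" for t i
  proof (cases "x $ i = 0")
    case True
    then show ?thesis
      using assms by simp
  next
    case False
    have "\<bar>t\<bar> * (\<bar>y $ i\<bar> + 1) < \<epsilon> * (\<bar>y $ i\<bar> + 1)"
      using that by (simp add: add_nonneg_pos)
    also have "\<dots> \<le> \<bar>x $ i\<bar>"
      unfolding \<epsilon>_def using Min_le[of "range r" "r i"] False by (simp add: r_def pos_le_divide_eq)
    finally have "\<bar>t * y $ i\<bar> < \<bar>x $ i\<bar>"
      by (simp add: abs_mult algebra_simps)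
    then show ?thesis
      by (simp add: sgn_add_eq)
  qed
  ultimately show ?thesis
    by blast
qed

lemma infinite_image_line:
  fixes x y :: "'a::real_vector"
  assumes "y \<noteq> 0" and "infinite T"
  shows "infinite ((\<lambda>t. x + t *\<^sub>R y) ` T)"
proof -
  have "inj (\<lambda>t. x + t *\<^sub>R y)"
    using assms(1) by (auto simp: inj_def)
  then show ?thesis
    using assms(2) finite_imageD inj_on_subset by blast
qed

theorem lemma2p2:
  fixes A :: "real ^ 'n ^ 'm" and b :: "real ^ 'm" and xs :: "real ^ 'n"
  assumes "CARD('m) < CARD('n)"
    and "A *v xs = b"
    and "card {i. xs $ i \<noteq> 0} > rank A"
  shows "infinite {x. A *v x = b \<and> (\<forall>i. sgn (x $ i) = sgn (xs $ i))}"
proof -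
  obtain y where "y \<noteq> 0" "A *v y = 0" and supp: "\<And>i. xs $ i = 0 \<Longrightarrow> y $ i = 0"
    using null_vector_supported_on[OF assms(3)] by auto
  obtain \<epsilon> :: real where "\<epsilon> > 0"
    and sgn_eq: "\<And>t i. \<bar>t\<bar> < \<epsilon> \<Longrightarrow> sgn ((xs + t *\<^sub>R y) $ i) = sgn (xs $ i)"
    using sgn_pattern_stable_along[of xs y] supp by blast
  have "(\<lambda>t. xs + t *\<^sub>R y) ` {0<..<\<epsilon>} \<subseteq> {x. A *v x = b \<and> (\<forall>i. sgn (x $ i) = sgn (xs $ i))}"
    using assms(2) \<open>A *v y = 0\<close> sgn_eq
    by (auto simp: matrix_vector_right_distrib matrix_vector_mult_scaleR)
  moreover have "infinite ((\<lambda>t. xs + t *\<^sub>R y) ` {0<..<\<epsilon>})"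
    using infinite_image_line[OF \<open>y \<noteq> 0\<close>] \<open>\<epsilon> > 0\<close> by simp
  ultimately show ?thesis
    using finite_subset by blast
qed

end
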